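(* Let $R$ be a $*$-ring. Then $R$ is strongly $J$-$*$-clean if and only if $R/J(R)$ is Boolean and $R$ is strongly $*$-clean.
   Context: All rings are associative with identity. A $*$-ring is a ring $R$ with an involution $*$, i.e. a map $a\mapsto a^*$ with $(a+b)^*=a^*+b^*$, $(ab)^*=b^*a^*$, $(a^* )^*=a$. $U(R)$ denotes the group of units and $J(R)$ the Jacobson radical of $R$. A projection is an element $e$ with $e^2=e=e^*$. $R$ is strongly $J$-$*$-clean if every $a\in R$ can be written $a=e+u$ with $e$ a projection, $u\in J(R)$ and $ae=ea$. $R$ is strongly $*$-clean if every $a\in R$ can be written $a=e+u$ with $e$ a projection, $u\in U(R)$ and $eu=ue$. A ring is Boolean if every element is idempotent. *)

theory Defs
  imports Main
begin

definition involution :: "('a::ring_1 \<Rightarrow> 'a) \<Rightarrow> bool" where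
  "involution s \<longleftrightarrow> (\<forall>a b. s (a + b) = s a + s b) \<and> (\<forall>a b. s (a * b) = s b * s a)
                      \<and> (\<forall>a. s (s a) = a)"

definition is_projection :: "('a::ring_1 \<Rightarrow> 'a) \<Rightarrow> 'a \<Rightarrow> bool" where
  "is_projection s e \<longleftrightarrow> e * e = e \<and> s e = e"

definition units_of_ring :: "'a::ring_1 set" where
  "units_of_ring = {u. \<exists>v. u * v = 1 \<and> v * u = 1}"

definition left_ideal :: "'a::ring_1 set \<Rightarrow> bool" where
  "left_ideal I \<longleftrightarrow> 0 \<in> I \<and> (\<forall>x\<in>I. \<forall>y\<in>I. x - y \<in> I) \<and> (\<forall>r. \<forall>x\<in>I. r * x \<in> I)"

definition maximal_left_ideal :: "'a::ring_1 set \<Rightarrow> bool" where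
  "maximal_left_ideal I \<longleftrightarrow> left_ideal I \<and> I \<noteq> UNIV \<and>
     (\<forall>K. left_ideal K \<and> I \<subseteq> K \<and> K \<noteq> UNIV \<longrightarrow> K = I)"

definition jacobson :: "'a::ring_1 set" where
  "jacobson = \<Inter> {I. maximal_left_ideal I}"

definition strongly_J_star_clean :: "('a::ring_1 \<Rightarrow> 'a) \<Rightarrow> bool" where
  "strongly_J_star_clean s \<longleftrightarrow>
     (\<forall>a. \<exists>e u. a = e + u \<and> is_projection s e \<and> u \<in> jacobson \<and> a * e = e * a)"

definition strongly_star_clean :: "('a::ring_1 \<Rightarrow> 'a) \<Rightarrow> bool" where
  "strongly_star_clean s \<longleftrightarrow>
     (\<forall>a. \<exists>e u. a = e + u \<and> is_projection s e \<and> u \<in> units_of_ring \<and> e * u = u * e)"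

text \<open>R/J(R) is Boolean: every coset a + J(R) is idempotent, i.e. a*a - a \<in> J(R).\<close>
definition quotient_by_jacobson_boolean :: "'a::ring_1 itself \<Rightarrow> bool" where
  "quotient_by_jacobson_boolean _ \<longleftrightarrow> (\<forall>a::'a. a * a - a \<in> jacobson)"

end

theory Submission
  imports Defs
begin

text \<open>
  If \<open>a = e + u\<close> with \<open>e\<close> a projection, \<open>u \<in> J(R)\<close> and \<open>ae = ea\<close>, then \<open>a\<^sup>2 - a = (2e + u - 1)u \<in> J(R)\<close>,
  and \<open>a = (1 - e) + (2e - 1 + u)\<close> is strongly *-clean because \<open>2e - 1\<close> is a self-inverse unit
  and \<open>2e - 1 + u = (2e - 1)(1 + (2e - 1)u)\<close>.
  Conversely, if \<open>R/J(R)\<close> is Boolean then \<open>2x \<in> J(R)\<close> for all \<open>x\<close>, and every unit \<open>w\<close> satisfies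
  \<open>w - 1 = w\<^sup>-\<^sup>1(w\<^sup>2 - w) \<in> J(R)\<close>; so a strongly *-clean decomposition \<open>a = e + w\<close> yields
  \<open>a = (1 - e) + ((w - 1) + 2e)\<close> with \<open>(w - 1) + 2e \<in> J(R)\<close>.
  Only the left-ideal structure of \<open>J(R)\<close> is used.
\<close>

lemma left_ideal_jacobson: "left_ideal (jacobson :: 'a::ring_1 set)"
  unfolding left_ideal_def jacobson_def maximal_left_ideal_def by auto

lemma jacobson_zero: "0 \<in> (jacobson :: 'a::ring_1 set)"
  using left_ideal_jacobson unfolding left_ideal_def by blast

lemma jacobson_diff: "x \<in> jacobson \<Longrightarrow> y \<in> jacobson \<Longrightarrow> (x::'a::ring_1) - y \<in> jacobson"
  using left_ideal_jacobson unfolding left_ideal_def by blast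

lemma jacobson_mult_left: "x \<in> jacobson \<Longrightarrow> (r::'a::ring_1) * x \<in> jacobson"
  using left_ideal_jacobson unfolding left_ideal_def by blast

lemma jacobson_add: "x \<in> jacobson \<Longrightarrow> y \<in> jacobson \<Longrightarrow> (x::'a::ring_1) + y \<in> jacobson"
  using jacobson_diff[of x "0 - y"] jacobson_diff[OF jacobson_zero, of y] by simp

lemma left_ideal_eq_UNIV_iff: "left_ideal K \<Longrightarrow> K = UNIV \<longleftrightarrow> (1::'a::ring_1) \<in> K"
  unfolding left_ideal_def by (metis UNIV_I UNIV_eq_I mult.right_neutral)

lemma left_ideal_Union_chain:
  fixes C :: "'a::ring_1 set set"
  assumes "C \<noteq> {}" and "\<forall>K\<in>C. left_ideal K" and chain: "\<forall>K\<in>C. \<forall>L\<in>C. K \<subseteq> L \<or> L \<subseteq> K"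
  shows "left_ideal (\<Union>C)"
  unfolding left_ideal_def
proof (intro conjI ballI allI)
  show "0 \<in> \<Union>C" using assms(1,2) unfolding left_ideal_def by blast
next
  fix x y assume "x \<in> \<Union>C" "y \<in> \<Union>C"
  then obtain K L where "K \<in> C" "L \<in> C" "x \<in> K" "y \<in> L" by blast
  with chain have "x \<in> K \<union> L \<and> y \<in> K \<union> L \<and> (K \<union> L = K \<or> K \<union> L = L)" by blast
  with \<open>K \<in> C\<close> \<open>L \<in> C\<close> assms(2) show "x - y \<in> \<Union>C" unfolding left_ideal_def by (metis UnionI)
next
  fix r x assume "x \<in> \<Union>C"
  with assms(2) show "r * x \<in> \<Union>C" unfolding left_ideal_def by blast
qed

lemma left_ideal_imp_subset_maximal_left_ideal:
  fixes L :: "'a::ring_1 set"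
  assumes "left_ideal L" and "1 \<notin> L"
  shows "\<exists>M. maximal_left_ideal M \<and> L \<subseteq> M"
proof -
  define S where "S = {K. left_ideal K \<and> L \<subseteq> K \<and> 1 \<notin> K}"
  have "\<exists>M\<in>S. \<forall>K\<in>S. M \<subseteq> K \<longrightarrow> K = M"
  proof (rule subset_Zorn_nonempty)
    show "S \<noteq> {}" using assms unfolding S_def by blast
  next
    fix C assume "C \<noteq> {}" and "subset.chain S C"
    then have "C \<subseteq> S" and "\<forall>K\<in>C. \<forall>K'\<in>C. K \<subseteq> K' \<or> K' \<subseteq> K"
      unfolding subset_chain_def by auto
    with \<open>C \<noteq> {}\<close> show "\<Union>C \<in> S"
      unfolding S_def using left_ideal_Union_chain[of C] by blast
  qed
  then obtain M where "M \<in> S" and M_max: "\<forall>K\<in>S. M \<subseteq> K \<longrightarrow> K = M" by blast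
  have "maximal_left_ideal M"
    unfolding maximal_left_ideal_def
  proof (intro conjI allI impI)
    show "left_ideal M" and "M \<noteq> UNIV" using \<open>M \<in> S\<close> unfolding S_def by auto
  next
    fix K assume K: "left_ideal K \<and> M \<subseteq> K \<and> K \<noteq> UNIV"
    with \<open>M \<in> S\<close> left_ideal_eq_UNIV_iff[of K] have "K \<in> S" unfolding S_def by blast
    with K M_max show "K = M" by blast
  qed
  with \<open>M \<in> S\<close> show ?thesis unfolding S_def by blast
qed

lemma left_ideal_principal: "left_ideal (range (\<lambda>r. r * (y::'a::ring_1)))"
  unfolding left_ideal_def
  by (auto simp: left_diff_distrib mult.assoc intro: range_eqI[of _ _ 0]
        range_eqI[where x = "_ - _"] range_eqI[where x = "_ * _"])

lemma jacobson_left_invertible: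
  fixes x :: "'a::ring_1"
  assumes "x \<in> jacobson"
  shows "\<exists>y. y * (1 + x) = 1"
proof (rule ccontr)
  assume no_inverse: "\<nexists>y. y * (1 + x) = 1"
  define L where "L = range (\<lambda>r. r * (1 + x))"
  have "left_ideal L" unfolding L_def by (rule left_ideal_principal)
  moreover have "1 \<notin> L" using no_inverse unfolding L_def by (metis rangeE)
  ultimately obtain M where "maximal_left_ideal M" and "L \<subseteq> M"
    using left_ideal_imp_subset_maximal_left_ideal by blast
  then have "left_ideal M" "x \<in> M" "1 + x \<in> M" "M \<noteq> UNIV"
    using assms unfolding maximal_left_ideal_def jacobson_def L_def by (auto intro: range_eqI[of _ _ 1])
  then have "(1 + x) - x \<in> M" unfolding left_ideal_def by blast
  with \<open>left_ideal M\<close> \<open>M \<noteq> UNIV\<close> show False using left_ideal_eq_UNIV_iff by auto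
qed

lemma one_plus_jacobson_unit:
  fixes x :: "'a::ring_1"
  assumes "x \<in> jacobson"
  shows "1 + x \<in> units_of_ring"
proof -
  obtain y where y: "y * (1 + x) = 1" using jacobson_left_invertible[OF assms] by blast
  have "y = 1 + - (y * x)" using y by (simp add: algebra_simps)
  moreover have "- (y * x) \<in> jacobson"
    using jacobson_mult_left[OF assms, of "- y"] by simp
  ultimately obtain z where "z * y = 1" using jacobson_left_invertible[of "- (y * x)"] by auto
  \<comment> \<open>\<open>y\<close> has a left inverse \<open>z\<close> and a right inverse \<open>1 + x\<close>, so the two coincide.\<close>
  have "z = z * y * (1 + x)" using y by (simp add: mult.assoc)
  with \<open>z * y = 1\<close> have "z = 1 + x" by simp
  with \<open>z * y = 1\<close> y show ?thesis unfolding units_of_ring_def by blast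
qed

lemma units_of_ring_mult:
  "u \<in> units_of_ring \<Longrightarrow> v \<in> units_of_ring \<Longrightarrow> (u::'a::ring_1) * v \<in> units_of_ring"
  unfolding units_of_ring_def
proof clarify
  fix u' v' assume "u * u' = 1" "u' * u = 1" "v * v' = 1" "v' * v = 1"
  moreover have "u * v * (v' * u') = u * (v * v') * u'" and "v' * u' * (u * v) = v' * (u' * u) * v"
    by (simp_all add: mult.assoc)
  ultimately have "u * v * (v' * u') = 1" and "v' * u' * (u * v) = 1" by simp_all
  then show "\<exists>w. u * v * w = 1 \<and> w * (u * v) = 1" by blast
qed

lemma idempotent_reflection_plus_jacobson_unit:
  fixes e u :: "'a::ring_1"
  assumes "e * e = e" and "u \<in> jacobson"
  shows "e + e - 1 + u \<in> units_of_ring"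
proof -
  define f where "f = e + e - 1"
  have ff: "f * f = 1" unfolding f_def using assms(1) by (simp add: algebra_simps)
  then have "f + u = f * (1 + f * u)" by (simp add: distrib_left flip: mult.assoc)
  moreover have "f \<in> units_of_ring" using ff unfolding units_of_ring_def by blast
  ultimately show ?thesis unfolding f_def[symmetric]
    using units_of_ring_mult one_plus_jacobson_unit jacobson_mult_left assms(2) by metis
qed

lemma double_in_jacobson_if_boolean:
  fixes x :: "'a::ring_1"
  assumes "quotient_by_jacobson_boolean TYPE('a)"
  shows "x + x \<in> jacobson"
proof -
  have "(x + x) * (x + x) - (x + x) \<in> jacobson" and "x * x - x \<in> jacobson"
    using assms unfolding quotient_by_jacobson_boolean_def by blast+
  moreover have "x + x = ((x + x) * (x + x) - (x + x)) - ((x * x - x) + (x * x - x) + (x * x - x) + (x * x - x))"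
    by (simp add: algebra_simps)
  ultimately show ?thesis by (metis jacobson_add jacobson_diff)
qed

lemma unit_minus_one_in_jacobson_if_boolean:
  fixes w :: "'a::ring_1"
  assumes "quotient_by_jacobson_boolean TYPE('a)" and "w \<in> units_of_ring"
  shows "w - 1 \<in> jacobson"
proof -
  obtain v where "v * w = 1" using assms(2) unfolding units_of_ring_def by blast
  then have "w - 1 = v * (w * w - w)" by (simp add: right_diff_distrib flip: mult.assoc)
  with assms(1) show ?thesis
    unfolding quotient_by_jacobson_boolean_def by (metis jacobson_mult_left)
qed

lemma involution_one: "involution s \<Longrightarrow> s 1 = (1::'a::ring_1)"
  unfolding involution_def by (metis mult_1 mult.right_neutral)

lemma involution_diff: "involution s \<Longrightarrow> s (a - b) = s a - (s b::'a::ring_1)"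
  unfolding involution_def by (metis add_diff_cancel_right' diff_add_cancel)

lemma is_projection_one_minus:
  fixes e :: "'a::ring_1"
  assumes "involution s" and "is_projection s e"
  shows "is_projection s (1 - e)"
  using assms(2) involution_one[OF assms(1)] involution_diff[OF assms(1), of 1 e]
  unfolding is_projection_def by (simp add: algebra_simps)

lemma strongly_J_star_clean_imp_quotient_boolean:
  fixes s :: "'a::ring_1 \<Rightarrow> 'a"
  assumes "strongly_J_star_clean s"
  shows "quotient_by_jacobson_boolean TYPE('a)"
  unfolding quotient_by_jacobson_boolean_def
proof
  fix a :: 'a
  obtain e u where a: "a = e + u" and "is_projection s e" and u: "u \<in> jacobson" and "a * e = e * a"
    using assms unfolding strongly_J_star_clean_def by blast
  then have "e * e = e" and "u * e = e * u"
    unfolding is_projection_def by (auto simp: algebra_simps)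
  then have "a * a - a = (e + e + u - 1) * u" unfolding a by (simp add: algebra_simps)
  with u show "a * a - a \<in> jacobson" by (simp add: jacobson_mult_left)
qed

lemma strongly_J_star_clean_imp_strongly_star_clean:
  fixes s :: "'a::ring_1 \<Rightarrow> 'a"
  assumes "involution s" and "strongly_J_star_clean s"
  shows "strongly_star_clean s"
  unfolding strongly_star_clean_def
proof
  fix a :: 'a
  obtain e u where a: "a = e + u" and e: "is_projection s e" and "u \<in> jacobson" and "a * e = e * a"
    using assms(2) unfolding strongly_J_star_clean_def by blast
  then have "e * e = e" and "a - (1 - e) = e + e - 1 + u"
    unfolding is_projection_def by auto
  with \<open>u \<in> jacobson\<close> have "a - (1 - e) \<in> units_of_ring"
    using idempotent_reflection_plus_jacobson_unit by metis
  moreover have "(1 - e) * (a - (1 - e)) = (a - (1 - e)) * (1 - e)"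
    using \<open>a * e = e * a\<close> by (simp add: algebra_simps)
  ultimately show "\<exists>e u. a = e + u \<and> is_projection s e \<and> u \<in> units_of_ring \<and> e * u = u * e"
    using is_projection_one_minus[OF assms(1) e] by (intro exI[of _ "1 - e"] exI[of _ "a - (1 - e)"]) simp
qed

lemma quotient_boolean_strongly_star_clean_imp_strongly_J_star_clean:
  fixes s :: "'a::ring_1 \<Rightarrow> 'a"
  assumes "involution s" and "quotient_by_jacobson_boolean TYPE('a)" and "strongly_star_clean s"
  shows "strongly_J_star_clean s"
  unfolding strongly_J_star_clean_def
proof
  fix a :: 'a
  obtain e w where a: "a = e + w" and e: "is_projection s e" and "w \<in> units_of_ring" and "e * w = w * e"
    using assms(3) unfolding strongly_star_clean_def by blast
  have "a + e - 1 = (w - 1) + (e + e)" unfolding a by (simp add: algebra_simps)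
  then have "a + e - 1 \<in> jacobson"
    using unit_minus_one_in_jacobson_if_boolean[OF assms(2) \<open>w \<in> units_of_ring\<close>]
      double_in_jacobson_if_boolean[OF assms(2)] jacobson_add by metis
  moreover have "a * (1 - e) = (1 - e) * a"
    using e \<open>e * w = w * e\<close> unfolding a is_projection_def by (simp add: algebra_simps)
  ultimately show "\<exists>e u. a = e + u \<and> is_projection s e \<and> u \<in> jacobson \<and> a * e = e * a"
    using is_projection_one_minus[OF assms(1) e] by (intro exI[of _ "1 - e"] exI[of _ "a + e - 1"]) simp
qed

theorem proposition2p6:
  fixes s :: "'a::ring_1 \<Rightarrow> 'a"
  assumes "involution s"
  shows "strongly_J_star_clean s \<longleftrightarrow>
           (quotient_by_jacobson_boolean TYPE('a) \<and> strongly_star_clean s)"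
  using assms strongly_J_star_clean_imp_quotient_boolean
    strongly_J_star_clean_imp_strongly_star_clean
    quotient_boolean_strongly_star_clean_imp_strongly_J_star_clean
  by blast

end
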